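(* Let $\mathcal H=\bigoplus_{n\ge0}\mathcal H_n$ be a connected graded Hopf algebra over a field $\mathbb K$ of characteristic zero, let $\alpha:\mathcal H_1\to\mathbb K$ be a nonzero linear map and let $q=q_\alpha$ be the associated inverse-factorial character. Then $q$ is multiplicative: $q(xy)=q(x)q(y)$ for all $x,y\in\mathcal H$. Moreover, write $q=\varepsilon+\varphi$ with $\varphi(\mathbf 1)=0$ and, for $h\in\mathbb K$, set $q^{*h}(x):=\sum_{p\ge0}\binom{h}{p}\varphi^{*p}(x)$ (a finite sum for each $x$). Then for every $h\in\mathbb K$, $q^{*h}$ is a character of $\mathcal H$ and $$q^{*h}(x)=h^{|x|}\,q(x)$$ for every homogeneous $x\in\mathcal H$.
   Context: A connected graded Hopf algebra is $\mathcal H=\bigoplus_{n\ge0}\mathcal H_n$ with $\mathcal H_0=\mathbb K\mathbf 1$, product and coproduct $\Delta$ respecting the grading; $|x|$ is the degree of a homogeneous $x$, $\varepsilon$ the counit. Sweedler notation: $\Delta(x)=\sum_{(x)}x_1\otimes x_2$; the reduced coproduct is $\Delta'(x)=\Delta(x)-x\otimes\mathbf 1-\mathbf 1\otimes x=\sum'_{(x)}x'\otimes x''$, where for homogeneous $x$ the $x',x''$ may be taken homogeneous of degrees $<|x|$ adding up to $|x|$. Convolution of linear forms: $(\phi*\psi)(x)=\sum_{(x)}\phi(x_1)\psi(x_2)$, with unit $\varepsilon$; $\varphi^{*0}=\varepsilon$. The inverse-factorial character $q_\alpha$ is the linear form on $\mathcal H$ determined by $q_\alpha(\mathbf 1)=1$,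 $q_\alpha|_{\mathcal H_1}=\alpha$, and for homogeneous $x$ with $|x|\ge2$: $q_\alpha(x)=\frac{1}{2^{|x|}-2}\sum'_{(x)}q_\alpha(x')q_\alpha(x'')$ (equivalently $q_\alpha*q_\alpha(x)=2^{|x|}q_\alpha(x)$ for all homogeneous $x$). *)

theory Defs
  imports Complex_Main
begin

text \<open>
  The coproduct is given by a representative list of pairs: cop x = [(a1,b1),...,(an,bn)]
  represents the tensor sum of ai (x) bi in H (x) H.  All axioms on tensors are stated by
  evaluating against products of K-linear functionals f (x) g (resp. f (x) g (x) k), which
  separate the points of tensor products of vector spaces, so they are equivalent to the
  usual identities in H (x) H (resp. H (x) H (x) H).
\<close>

definition lin_form :: "('k::field \<Rightarrow> 'h::ab_group_add \<Rightarrow> 'h) \<Rightarrow> ('h \<Rightarrow> 'k) \<Rightarrow> bool" where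
  "lin_form smult f \<longleftrightarrow> (\<forall>x y. f (x + y) = f x + f y) \<and> (\<forall>c x. f (smult c x) = c * f x)"

definition lin_map :: "('k::field \<Rightarrow> 'h::ab_group_add \<Rightarrow> 'h) \<Rightarrow> ('h \<Rightarrow> 'h) \<Rightarrow> bool" where
  "lin_map smult S \<longleftrightarrow> (\<forall>x y. S (x + y) = S x + S y) \<and> (\<forall>c x. S (smult c x) = smult c (S x))"

definition subspace_of :: "('k::field \<Rightarrow> 'h::ab_group_add \<Rightarrow> 'h) \<Rightarrow> 'h set \<Rightarrow> bool" where
  "subspace_of smult V \<longleftrightarrow> 0 \<in> V \<and> (\<forall>x\<in>V. \<forall>y\<in>V. x + y \<in> V) \<and> (\<forall>c. \<forall>x\<in>V. smult c x \<in> V)"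

definition tev :: "('h \<Rightarrow> 'k::field) \<Rightarrow> ('h \<Rightarrow> 'k) \<Rightarrow> ('h \<times> 'h) list \<Rightarrow> 'k" where
  "tev f g xs = sum_list (map (\<lambda>(a, b). f a * g b) xs)"

definition is_decomp :: "(nat \<Rightarrow> 'h::ab_group_add set) \<Rightarrow> 'h \<Rightarrow> (nat \<Rightarrow> 'h) \<Rightarrow> bool" where
  "is_decomp Hn x c \<longleftrightarrow> (\<forall>n. c n \<in> Hn n) \<and> finite {n. c n \<noteq> 0} \<and> x = (\<Sum>n\<in>{n. c n \<noteq> 0}. c n)"

definition direct_sum_decomp :: "(nat \<Rightarrow> 'h::ab_group_add set) \<Rightarrow> bool" where
  "direct_sum_decomp Hn \<longleftrightarrow> (\<forall>x. \<exists>!c. is_decomp Hn x c)"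

definition comp :: "(nat \<Rightarrow> 'h::ab_group_add set) \<Rightarrow> nat \<Rightarrow> 'h \<Rightarrow> 'h" where
  "comp Hn n x = (THE c. is_decomp Hn x c) n"

definition conn_graded_hopf ::
  "('k::field_char_0 \<Rightarrow> 'h::ab_group_add \<Rightarrow> 'h) \<Rightarrow> ('h \<Rightarrow> 'h \<Rightarrow> 'h) \<Rightarrow> 'h
   \<Rightarrow> ('h \<Rightarrow> ('h \<times> 'h) list) \<Rightarrow> ('h \<Rightarrow> 'k) \<Rightarrow> (nat \<Rightarrow> 'h set) \<Rightarrow> bool" where
  "conn_graded_hopf smult mult one cop eps Hn \<longleftrightarrow>
     \<comment> \<open>vector space over K\<close>
     vector_space smult \<and>
     \<comment> \<open>grading\<close>
     (\<forall>n. subspace_of smult (Hn n)) \<and> direct_sum_decomp Hn \<and>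
     \<comment> \<open>connectedness: H_0 = K 1\<close>
     Hn 0 = range (\<lambda>c. smult c one) \<and> one \<noteq> 0 \<and>
     \<comment> \<open>unital associative algebra, bilinear product\<close>
     (\<forall>x y z. mult (x + y) z = mult x z + mult y z) \<and>
     (\<forall>x y z. mult x (y + z) = mult x y + mult x z) \<and>
     (\<forall>c x y. mult (smult c x) y = smult c (mult x y)) \<and>
     (\<forall>c x y. mult x (smult c y) = smult c (mult x y)) \<and>
     (\<forall>x y z. mult (mult x y) z = mult x (mult y z)) \<and>
     (\<forall>x. mult one x = x \<and> mult x one = x) \<and>
     \<comment> \<open>product respects grading\<close>
     (\<forall>m n x y. x \<in> Hn m \<longrightarrow> y \<in> Hn n \<longrightarrow> mult x y \<in> Hn (m + n)) \<and>
     \<comment> \<open>coproduct is a linear map H \<rightarrow> H (x) H\<close>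
     (\<forall>f g. lin_form smult f \<longrightarrow> lin_form smult g \<longrightarrow>
        (\<forall>x y. tev f g (cop (x + y)) = tev f g (cop x) + tev f g (cop y)) \<and>
        (\<forall>c x. tev f g (cop (smult c x)) = c * tev f g (cop x))) \<and>
     \<comment> \<open>coassociativity\<close>
     (\<forall>f g k x. lin_form smult f \<longrightarrow> lin_form smult g \<longrightarrow> lin_form smult k \<longrightarrow>
        tev (\<lambda>a. tev f g (cop a)) k (cop x) = tev f (\<lambda>b. tev g k (cop b)) (cop x)) \<and>
     \<comment> \<open>counit\<close>
     lin_form smult eps \<and>
     (\<forall>f x. lin_form smult f \<longrightarrow> tev eps f (cop x) = f x \<and> tev f eps (cop x) = f x) \<and>
     \<comment> \<open>coproduct and counit are algebra morphisms\<close>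
     (\<forall>f g x y. lin_form smult f \<longrightarrow> lin_form smult g \<longrightarrow>
        tev f g (cop (mult x y)) =
          (\<Sum>(a, b)\<leftarrow>cop x. \<Sum>(c, d)\<leftarrow>cop y. f (mult a c) * g (mult b d))) \<and>
     (\<forall>f g. lin_form smult f \<longrightarrow> lin_form smult g \<longrightarrow> tev f g (cop one) = f one * g one) \<and>
     (\<forall>x y. eps (mult x y) = eps x * eps y) \<and> eps one = 1 \<and>
     \<comment> \<open>coproduct and counit respect the grading\<close>
     (\<forall>n x f g. x \<in> Hn n \<longrightarrow> lin_form smult f \<longrightarrow> lin_form smult g \<longrightarrow>
        tev f g (cop x) = (\<Sum>i\<le>n. tev (\<lambda>a. f (comp Hn i a)) (\<lambda>b. g (comp Hn (n - i) b)) (cop x))) \<and>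
     (\<forall>n x. 0 < n \<longrightarrow> x \<in> Hn n \<longrightarrow> eps x = 0) \<and>
     \<comment> \<open>antipode\<close>
     (\<exists>S. lin_map smult S \<and>
        (\<forall>f x. lin_form smult f \<longrightarrow>
           (\<Sum>(a, b)\<leftarrow>cop x. f (mult (S a) b)) = eps x * f one \<and>
           (\<Sum>(a, b)\<leftarrow>cop x. f (mult a (S b))) = eps x * f one))"

definition conv :: "('h \<Rightarrow> ('h \<times> 'h) list) \<Rightarrow> ('h \<Rightarrow> 'k::field) \<Rightarrow> ('h \<Rightarrow> 'k) \<Rightarrow> 'h \<Rightarrow> 'k" where
  "conv cop \<phi> \<psi> x = tev \<phi> \<psi> (cop x)"

primrec convpow :: "('h \<Rightarrow> ('h \<times> 'h) list) \<Rightarrow> ('h \<Rightarrow> 'k::field) \<Rightarrow> ('h \<Rightarrow> 'k) \<Rightarrow> nat \<Rightarrow> 'h \<Rightarrow> 'k" where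
  "convpow cop eps \<phi> 0 = eps"
| "convpow cop eps \<phi> (Suc p) = conv cop \<phi> (convpow cop eps \<phi> p)"

definition character :: "('k::field \<Rightarrow> 'h::ab_group_add \<Rightarrow> 'h) \<Rightarrow> ('h \<Rightarrow> 'h \<Rightarrow> 'h) \<Rightarrow> 'h \<Rightarrow> ('h \<Rightarrow> 'k) \<Rightarrow> bool" where
  "character smult mult one \<psi> \<longleftrightarrow> lin_form smult \<psi> \<and> \<psi> one = 1 \<and> (\<forall>x y. \<psi> (mult x y) = \<psi> x * \<psi> y)"

text \<open>Inverse-factorial character q_alpha, characterised by its defining properties
  (linear, q(1) = 1, q = alpha on H_1, and the recursion via the reduced coproduct;
  note sum' q(x')q(x'') = (q*q)(x) - q(x)q(1) - q(1)q(x)).\<close>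
definition inv_fact_char ::
  "('k::field_char_0 \<Rightarrow> 'h::ab_group_add \<Rightarrow> 'h) \<Rightarrow> 'h \<Rightarrow> ('h \<Rightarrow> ('h \<times> 'h) list)
   \<Rightarrow> (nat \<Rightarrow> 'h set) \<Rightarrow> ('h \<Rightarrow> 'k) \<Rightarrow> ('h \<Rightarrow> 'k) \<Rightarrow> bool" where
  "inv_fact_char smult one cop Hn \<alpha> q \<longleftrightarrow>
     lin_form smult q \<and> q one = 1 \<and> (\<forall>x\<in>Hn 1. q x = \<alpha> x) \<and>
     (\<forall>n x. 2 \<le> n \<longrightarrow> x \<in> Hn n \<longrightarrow>
        q x = (tev q q (cop x) - q x * q one - q one * q x) / (2 ^ n - 2))"

definition qpow :: "('h \<Rightarrow> ('h \<times> 'h) list) \<Rightarrow> ('h \<Rightarrow> 'k::field_char_0) \<Rightarrow> ('h \<Rightarrow> 'k) \<Rightarrow> 'k \<Rightarrow> 'h \<Rightarrow> 'k" where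
  "qpow cop eps q h x =
     (let \<phi> = (\<lambda>y. q y - eps y);
          t = (\<lambda>p. (h gchoose p) * convpow cop eps \<phi> p x)
      in \<Sum>p\<in>{p. t p \<noteq> 0}. t p)"

end

theory Submission
  imports Defs
    "HOL-Computational_Algebra.Polynomial"
    "HOL-Computational_Algebra.Formal_Power_Series"
begin

text \<open>
  The defining recursion says (q * q)(x) = 2^n q(x) on H_n. Write q(ac) = q(a) q(c) + \<delta>(a, c)
  with \<delta> bilinear and expand (q * q)(xy) through \<Delta>(xy) = \<Delta>(x) \<Delta>(y). By induction on the
  total degree m + n of x and y, \<delta> vanishes on every pair of components except (x, y) itself
  and (1, 1), so 2^(m+n) q(xy) = 2^m q(x) 2^n q(y) + 2 \<delta>(x, y), which forces \<delta>(x, y) = 0.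

  The binomial convolution powers satisfy q^(*s) * q^(*t) = q^(*(s+t)) by coassociativity and
  Vandermonde's identity, hence q^(*2^j)(x) = 2^(jn) q(x) on H_n. Since \<phi>^(*p) vanishes on H_n
  for p > n, both sides of q^(*h)(x) = h^n q(x) are polynomials in h, and they agree at the
  infinitely many points h = 2^j.
\<close>

lemma tev_Nil [simp]: "tev f g [] = 0"
  by (simp add: tev_def)

lemma tev_Cons [simp]: "tev f g (p # xs) = f (fst p) * g (snd p) + tev f g xs"
  by (cases p) (simp add: tev_def)

lemma tev_sum_left: "tev (\<lambda>a. \<Sum>i\<in>I. f i a) g xs = (\<Sum>i\<in>I. tev (f i) g xs)"
  by (induction xs) (auto simp: sum.distrib sum_distrib_right)

lemma tev_sum_right: "tev f (\<lambda>b. \<Sum>i\<in>I. g i b) xs = (\<Sum>i\<in>I. tev f (g i) xs)"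
  by (induction xs) (auto simp: sum.distrib sum_distrib_left)

lemma tev_scale_left: "tev (\<lambda>a. c * f a) g xs = c * tev f g xs"
  by (induction xs) (auto simp: algebra_simps)

lemma tev_scale_right: "tev f (\<lambda>b. c * g b) xs = c * tev f g xs"
  by (induction xs) (auto simp: algebra_simps)

lemma tev_add_left: "tev (\<lambda>a. f a + f' a) g xs = tev f g xs + tev f' g xs"
  by (induction xs) (auto simp: algebra_simps)

lemma tev_add_right: "tev f (\<lambda>b. g b + g' b) xs = tev f g xs + tev f g' xs"
  by (induction xs) (auto simp: algebra_simps)

lemma tev_zero_left: "tev (\<lambda>a. 0) g xs = 0"
  by (induction xs) auto

lemma tev_zero_right: "tev f (\<lambda>b. 0) xs = 0"
  by (induction xs) auto

lemma sum_list_pairs_sum: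
  "(\<Sum>(a, b)\<leftarrow>xs. \<Sum>i\<in>I. F i a b) = (\<Sum>i\<in>I. \<Sum>(a, b)\<leftarrow>xs. F i a b)"
  by (induction xs) (auto simp: sum.distrib)

lemma sum_list_pairs_swap:
  "(\<Sum>(a, b)\<leftarrow>xs. \<Sum>(c, d)\<leftarrow>ys. F a b c d) =
    (\<Sum>(c, d)\<leftarrow>ys. \<Sum>(a, b)\<leftarrow>xs. (F a b c d :: 'a::comm_monoid_add))"
proof (induction xs)
  case (Cons p xs)
  then show ?case by (cases p) (simp add: split_def sum_list_addf)
qed simp

lemma sum_atMost_atMost_single:
  assumes "k \<le> m" "l \<le> n" "\<And>i j. i \<le> m \<Longrightarrow> j \<le> n \<Longrightarrow> (i, j) \<noteq> (k, l) \<Longrightarrow> T i j = 0"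
  shows "(\<Sum>i\<le>(m::nat). \<Sum>j\<le>(n::nat). T i j) = (T k l :: 'a::comm_monoid_add)"
proof -
  have "(\<Sum>i\<le>m. \<Sum>j\<le>n. T i j) = (\<Sum>(i, j)\<in>{..m} \<times> {..n}. T i j)"
    by (simp add: sum.cartesian_product)
  also have "\<dots> = (\<Sum>(i, j)\<in>{(k, l)}. T i j)"
    by (rule sum.mono_neutral_right) (use assms in \<open>auto simp: finite_cartesian_product\<close>)
  finally show ?thesis by simp
qed

lemma gchoose_convolution_sum:
  fixes s t :: "'a::field_char_0"
  assumes "\<And>k. n < k \<Longrightarrow> P k = 0"
  shows "(\<Sum>p\<le>n. \<Sum>r\<le>n. (s gchoose p) * (t gchoose r) * P (p + r)) = (\<Sum>k\<le>n. ((s + t) gchoose k) * P k)"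
proof -
  let ?g = "\<lambda>p r. (s gchoose p) * (t gchoose r) * P (p + r)"
  have "(\<Sum>p\<le>n. \<Sum>r\<le>n. ?g p r) = (\<Sum>(p, r)\<in>{..n} \<times> {..n}. ?g p r)"
    by (simp add: sum.cartesian_product)
  also have "\<dots> = (\<Sum>(p, r)\<in>{(p, r). p + r \<le> n}. ?g p r)"
    by (rule sum.mono_neutral_right) (use assms in \<open>auto simp: not_less[symmetric]\<close>)
  also have "\<dots> = (\<Sum>k\<le>n. \<Sum>p\<le>k. ?g p (k - p))"
    by (rule sum.triangle_reindex_eq)
  also have "\<dots> = (\<Sum>k\<le>n. (\<Sum>p\<le>k. (s gchoose p) * (t gchoose (k - p))) * P k)"
    by (simp add: sum_distrib_right)
  also have "\<dots> = (\<Sum>k\<le>n. ((s + t) gchoose k) * P k)"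
    by (simp add: gbinomial_Vandermonde[unfolded atLeast0AtMost])
  finally show ?thesis .
qed

lemma two_power_neq_two:
  assumes "2 \<le> n"
  shows "(2::'a::semiring_char_0) ^ n \<noteq> 2"
proof -
  have "(2::nat) ^ 2 \<le> 2 ^ n"
    using assms by (rule power_increasing) simp
  then have "(2::nat) ^ n \<noteq> 2"
    by auto
  then show ?thesis
    by (metis of_nat_eq_iff of_nat_numeral of_nat_power)
qed

lemma inj_two_power: "inj (\<lambda>j::nat. (2::'a::semiring_char_0) ^ j)"
proof (rule injI)
  fix i j :: nat
  assume "(2::'a) ^ i = 2 ^ j"
  then have "of_nat (2 ^ i) = (of_nat (2 ^ j) :: 'a)"
    by simp
  then show "i = j"
    by (simp only: of_nat_eq_iff power_inject_exp)
qed

lemma gchoose_sum_eq_power_if_infinite: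
  fixes c :: "nat \<Rightarrow> 'a::field_char_0"
  assumes "infinite {z. (\<Sum>p\<le>n. c p * (z gchoose p)) = d * z ^ n}"
  shows "(\<Sum>p\<le>n. c p * (h gchoose p)) = d * h ^ n"
proof -
  define Q where "Q = (\<Sum>p\<le>n. Polynomial.smult (c p / fact p) (\<Prod>i=0..<p. [:- of_nat i, 1:])) - monom d n"
  have Q_eval: "poly Q z = (\<Sum>p\<le>n. c p * (z gchoose p)) - d * z ^ n" for z
  proof -
    have "(z gchoose p) = (\<Prod>i=0..<p. z - of_nat i) / fact p" for p
      using gbinomial_mult_fact'[of z p] by (simp add: field_simps)
    then show ?thesis
      by (simp add: Q_def poly_sum poly_prod poly_monom mult.commute)
  qed
  then have "{z. (\<Sum>p\<le>n. c p * (z gchoose p)) = d * z ^ n} \<subseteq> {z. poly Q z = 0}"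
    by auto
  then have "Q = 0"
    using assms poly_roots_finite finite_subset by blast
  then show ?thesis
    using Q_eval[of h] by simp
qed

lemma lin_form_zero: "lin_form sm f \<Longrightarrow> f 0 = 0"
  unfolding lin_form_def by (metis add_cancel_right_right add_0)

lemma lin_form_sum: "lin_form sm f \<Longrightarrow> f (sum g A) = (\<Sum>i\<in>A. f (g i))"
  by (induction A rule: infinite_finite_induct) (auto simp: lin_form_zero lin_form_def)

lemma lin_form_diff: "lin_form sm f \<Longrightarrow> lin_form sm g \<Longrightarrow> lin_form sm (\<lambda>x. f x - g x)"
  unfolding lin_form_def by (auto simp: algebra_simps)

lemma lin_form_scale: "lin_form sm f \<Longrightarrow> lin_form sm (\<lambda>x. c * f x)"
  unfolding lin_form_def by (auto simp: algebra_simps)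

lemma lin_form_scale_right: "lin_form sm f \<Longrightarrow> lin_form sm (\<lambda>x. f x * c)"
  unfolding lin_form_def by (auto simp: algebra_simps)

definition bilin_form :: "('k::field \<Rightarrow> 'h::ab_group_add \<Rightarrow> 'h) \<Rightarrow> ('h \<Rightarrow> 'h \<Rightarrow> 'k) \<Rightarrow> bool" where
  "bilin_form sm B \<longleftrightarrow> (\<forall>a. lin_form sm (B a)) \<and> (\<forall>c. lin_form sm (\<lambda>a. B a c))"

lemma bilin_form_product:
  "lin_form sm f \<Longrightarrow> lin_form sm g \<Longrightarrow> bilin_form sm (\<lambda>a c. f a * g c)"
  unfolding bilin_form_def lin_form_def by (auto simp: algebra_simps)

locale conn_graded_hopf_alg =
  fixes smult :: "'k::field_char_0 \<Rightarrow> 'h::ab_group_add \<Rightarrow> 'h"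
    and mult :: "'h \<Rightarrow> 'h \<Rightarrow> 'h" and one :: 'h
    and cop :: "'h \<Rightarrow> ('h \<times> 'h) list" and eps :: "'h \<Rightarrow> 'k"
    and Hn :: "nat \<Rightarrow> 'h set"
  assumes hopf: "conn_graded_hopf smult mult one cop eps Hn"
begin

abbreviation "lf \<equiv> lin_form smult"

lemma vector_space: "vector_space smult"
  using hopf unfolding conn_graded_hopf_def by (elim conjE) meson

lemma Hn_subspace: "subspace_of smult (Hn n)"
  using hopf unfolding conn_graded_hopf_def by (elim conjE) meson

lemma direct_sum: "direct_sum_decomp Hn"
  using hopf unfolding conn_graded_hopf_def by (elim conjE) meson

lemma H0_eq: "Hn 0 = range (\<lambda>c. smult c one)"
  using hopf unfolding conn_graded_hopf_def by (elim conjE) meson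

lemma mult_add_left: "mult (x + y) z = mult x z + mult y z"
  using hopf unfolding conn_graded_hopf_def by (elim conjE) meson

lemma mult_add_right: "mult x (y + z) = mult x y + mult x z"
  using hopf unfolding conn_graded_hopf_def by (elim conjE) meson

lemma mult_smult_left: "mult (smult c x) y = smult c (mult x y)"
  using hopf unfolding conn_graded_hopf_def by (elim conjE) meson

lemma mult_smult_right: "mult x (smult c y) = smult c (mult x y)"
  using hopf unfolding conn_graded_hopf_def by (elim conjE) meson

lemma mult_one_left: "mult one x = x"
  using hopf unfolding conn_graded_hopf_def by (elim conjE) meson

lemma mult_one_right: "mult x one = x"
  using hopf unfolding conn_graded_hopf_def by (elim conjE) meson

lemma mult_graded: "x \<in> Hn m \<Longrightarrow> y \<in> Hn n \<Longrightarrow> mult x y \<in> Hn (m + n)"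
  using hopf unfolding conn_graded_hopf_def by (elim conjE) meson

lemma cop_add: "lf f \<Longrightarrow> lf g \<Longrightarrow> tev f g (cop (x + y)) = tev f g (cop x) + tev f g (cop y)"
  using hopf unfolding conn_graded_hopf_def by (elim conjE) meson

lemma cop_smult: "lf f \<Longrightarrow> lf g \<Longrightarrow> tev f g (cop (smult c x)) = c * tev f g (cop x)"
  using hopf unfolding conn_graded_hopf_def by (elim conjE) meson

lemma coassoc: "lf f \<Longrightarrow> lf g \<Longrightarrow> lf k \<Longrightarrow>
    tev (\<lambda>a. tev f g (cop a)) k (cop x) = tev f (\<lambda>b. tev g k (cop b)) (cop x)"
  using hopf unfolding conn_graded_hopf_def by (elim conjE) meson

lemma lin_form_eps: "lf eps"
  using hopf unfolding conn_graded_hopf_def by (elim conjE) meson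

lemma counit_left: "lf f \<Longrightarrow> tev eps f (cop x) = f x"
  using hopf unfolding conn_graded_hopf_def by (elim conjE) meson

lemma counit_right: "lf f \<Longrightarrow> tev f eps (cop x) = f x"
  using hopf unfolding conn_graded_hopf_def by (elim conjE) meson

lemma cop_mult: "lf f \<Longrightarrow> lf g \<Longrightarrow>
    tev f g (cop (mult x y)) = (\<Sum>(a, b)\<leftarrow>cop x. \<Sum>(c, d)\<leftarrow>cop y. f (mult a c) * g (mult b d))"
  using hopf unfolding conn_graded_hopf_def by (elim conjE) meson

lemma cop_one: "lf f \<Longrightarrow> lf g \<Longrightarrow> tev f g (cop one) = f one * g one"
  using hopf unfolding conn_graded_hopf_def by (elim conjE) meson

lemma eps_one: "eps one = 1"
  using hopf unfolding conn_graded_hopf_def by (elim conjE) meson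

lemma cop_graded: "x \<in> Hn n \<Longrightarrow> lf f \<Longrightarrow> lf g \<Longrightarrow>
    tev f g (cop x) = (\<Sum>i\<le>n. tev (\<lambda>a. f (comp Hn i a)) (\<lambda>b. g (comp Hn (n - i) b)) (cop x))"
  using hopf unfolding conn_graded_hopf_def by (elim conjE) meson

lemma eps_graded: "0 < n \<Longrightarrow> x \<in> Hn n \<Longrightarrow> eps x = 0"
  using hopf unfolding conn_graded_hopf_def by (elim conjE) meson

interpretation V: vector_space smult
  by (rule vector_space)

lemma zero_in_Hn: "0 \<in> Hn n"
  using Hn_subspace[of n] by (simp add: subspace_of_def)

lemma add_in_Hn: "x \<in> Hn n \<Longrightarrow> y \<in> Hn n \<Longrightarrow> x + y \<in> Hn n"
  using Hn_subspace[of n] by (simp add: subspace_of_def)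

lemma smult_in_Hn: "x \<in> Hn n \<Longrightarrow> smult c x \<in> Hn n"
  using Hn_subspace[of n] by (simp add: subspace_of_def)

lemma one_in_H0: "one \<in> Hn 0"
  using H0_eq V.scale_one by (metis rangeI)

lemma is_decompI:
  assumes "\<And>n. c n \<in> Hn n" "\<And>n. n \<ge> N \<Longrightarrow> c n = 0" "x = (\<Sum>n<N. c n)"
  shows "is_decomp Hn x c"
proof -
  have supp: "{n. c n \<noteq> 0} \<subseteq> {..<N}"
    using assms(2) by (auto simp: not_less[symmetric])
  then have "(\<Sum>n<N. c n) = (\<Sum>n\<in>{n. c n \<noteq> 0}. c n)"
    by (intro sum.mono_neutral_right) auto
  moreover have "finite {n. c n \<noteq> 0}"
    using supp finite_subset by blast
  ultimately show ?thesis
    unfolding is_decomp_def using assms by auto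
qed

lemma is_decomp_comp: "is_decomp Hn x (\<lambda>n. comp Hn n x)"
  using theI'[of "is_decomp Hn x"] direct_sum
  unfolding comp_def direct_sum_decomp_def by simp

lemma comp_eqI: "is_decomp Hn x c \<Longrightarrow> comp Hn n x = c n"
  using is_decomp_comp[of x] direct_sum unfolding direct_sum_decomp_def by metis

lemma comp_in_Hn: "comp Hn n x \<in> Hn n"
  using is_decomp_comp[of x] by (simp add: is_decomp_def)

lemma comp_eventually_zero: "\<exists>N. \<forall>n\<ge>N. comp Hn n x = 0"
proof -
  have "finite {n. comp Hn n x \<noteq> 0}"
    using is_decomp_comp[of x] by (simp add: is_decomp_def)
  then obtain N where "{n. comp Hn n x \<noteq> 0} \<subseteq> {..<N}"
    using finite_nat_bounded by blast
  then have "\<forall>n\<ge>N. comp Hn n x = 0" by auto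
  then show ?thesis ..
qed

lemma sum_comp: assumes "\<forall>n\<ge>N. comp Hn n x = 0" shows "(\<Sum>n<N. comp Hn n x) = x"
proof -
  have "{n. comp Hn n x \<noteq> 0} \<subseteq> {..<N}"
    using assms by (auto simp: not_less[symmetric])
  then have "(\<Sum>n<N. comp Hn n x) = (\<Sum>n\<in>{n. comp Hn n x \<noteq> 0}. comp Hn n x)"
    by (intro sum.mono_neutral_right) auto
  then show ?thesis
    using is_decomp_comp[of x] by (simp add: is_decomp_def)
qed

lemma comp_homogeneous: "x \<in> Hn k \<Longrightarrow> comp Hn n x = (if n = k then x else 0)"
  by (rule comp_eqI, rule is_decompI[where N = "Suc k"]) (auto simp: zero_in_Hn)

lemma comp_add: "comp Hn n (x + y) = comp Hn n x + comp Hn n y"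
proof -
  obtain N where "\<forall>n\<ge>N. comp Hn n x = 0" "\<forall>n\<ge>N. comp Hn n y = 0"
    using comp_eventually_zero[of x] comp_eventually_zero[of y] by (metis max.boundedE)
  then have "is_decomp Hn (x + y) (\<lambda>n. comp Hn n x + comp Hn n y)"
    by (intro is_decompI[where N = N])
      (auto simp: comp_in_Hn add_in_Hn sum.distrib sum_comp)
  then show ?thesis by (rule comp_eqI)
qed

lemma comp_smult: "comp Hn n (smult c x) = smult c (comp Hn n x)"
proof -
  obtain N where N: "\<forall>n\<ge>N. comp Hn n x = 0"
    using comp_eventually_zero by blast
  then have "is_decomp Hn (smult c x) (\<lambda>n. smult c (comp Hn n x))"
    by (intro is_decompI[where N = N])
      (auto simp: comp_in_Hn smult_in_Hn sum_comp V.scale_sum_right[symmetric])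
  then show ?thesis by (rule comp_eqI)
qed

lemma lin_form_comp: "lf f \<Longrightarrow> lf (\<lambda>a. f (comp Hn n a))"
  unfolding lin_form_def by (auto simp: comp_add comp_smult)

lemma lin_form_sum_comp:
  assumes "lf f" "\<forall>n\<ge>N. comp Hn n x = 0"
  shows "f x = (\<Sum>n<N. f (comp Hn n x))"
  using lin_form_sum[OF assms(1)] sum_comp[OF assms(2)] by metis

lemma lin_form_H0: assumes "lf f" "x \<in> Hn 0" shows "f x = eps x * f one"
proof -
  obtain c where "x = smult c one"
    using assms(2) H0_eq by auto
  then show ?thesis
    using assms(1) lin_form_eps eps_one by (simp add: lin_form_def)
qed

lemma eps_comp0: "eps (comp Hn 0 x) = eps x"
proof -
  obtain N where "\<forall>n\<ge>Suc N. comp Hn n x = 0"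
    using comp_eventually_zero by (metis Suc_leD)
  then have "eps x = (\<Sum>n<Suc N. eps (comp Hn n x))"
    by (rule lin_form_sum_comp[OF lin_form_eps])
  also have "\<dots> = eps (comp Hn 0 x)"
    by (subst sum.lessThan_Suc_shift) (auto intro!: sum.neutral eps_graded comp_in_Hn)
  finally show ?thesis by simp
qed

lemma lin_form_comp0: "lf f \<Longrightarrow> f (comp Hn 0 x) = eps x * f one"
  using lin_form_H0[OF _ comp_in_Hn] eps_comp0 by simp

lemma lin_form_cop: "lf f \<Longrightarrow> lf g \<Longrightarrow> lf (\<lambda>x. tev f g (cop x))"
  unfolding lin_form_def using cop_add cop_smult lin_form_def by blast

lemma lin_form_mult_left: "lf f \<Longrightarrow> lf (\<lambda>a. f (mult a c))"
  unfolding lin_form_def by (auto simp: mult_add_left mult_smult_left)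

lemma lin_form_mult_right: "lf f \<Longrightarrow> lf (\<lambda>c. f (mult a c))"
  unfolding lin_form_def by (auto simp: mult_add_right mult_smult_right)

lemma mult_sum_left: "mult (sum g A) y = (\<Sum>i\<in>A. mult (g i) y)"
  by (induction A rule: infinite_finite_induct)
    (auto simp: mult_add_left mult_add_left[of 0 0, simplified])

lemma mult_sum_right: "mult y (sum g A) = (\<Sum>i\<in>A. mult y (g i))"
  by (induction A rule: infinite_finite_induct)
    (auto simp: mult_add_right mult_add_right[of _ 0 0, simplified])

lemma multiplicative_if_homogeneous:
  assumes f: "lf f"
    and hom: "\<And>m n x y. x \<in> Hn m \<Longrightarrow> y \<in> Hn n \<Longrightarrow> f (mult x y) = f x * f y"
  shows "f (mult x y) = f x * f y"
proof -
  obtain N where x: "\<forall>n\<ge>N. comp Hn n x = 0" and y: "\<forall>n\<ge>N. comp Hn n y = 0"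
    using comp_eventually_zero[of x] comp_eventually_zero[of y] by (metis max.boundedE)
  have "mult x y = mult (\<Sum>i<N. comp Hn i x) (\<Sum>j<N. comp Hn j y)"
    by (simp only: sum_comp[OF x] sum_comp[OF y])
  then have "f (mult x y) = f (\<Sum>i<N. \<Sum>j<N. mult (comp Hn i x) (comp Hn j y))"
    by (subst (asm) mult_sum_left) (simp only: mult_sum_right)
  also have "\<dots> = (\<Sum>i<N. \<Sum>j<N. f (comp Hn i x) * f (comp Hn j y))"
    unfolding lin_form_sum[OF f] by (intro sum.cong refl hom[OF comp_in_Hn comp_in_Hn])
  also have "\<dots> = f x * f y"
    by (simp add: lin_form_sum_comp[OF f x] lin_form_sum_comp[OF f y] sum_product)
  finally show ?thesis .
qed

text \<open>The sums below evaluate \<open>\<Sum> f(x', y') g(x'', y'')\<close> over \<open>\<Delta>(x) = \<Sum> x' \<otimes> x''\<close> and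
  \<open>\<Delta>(y) = \<Sum> y' \<otimes> y''\<close>, i.e. the pairing of \<open>f \<otimes> g\<close> with \<open>\<Delta>(x) \<Delta>(y)\<close> in the tensor square.\<close>

lemma cop_cop_graded:
  assumes x: "x \<in> Hn m" and y: "y \<in> Hn n"
    and f: "bilin_form smult f" and g: "bilin_form smult g"
  shows "(\<Sum>(a, b)\<leftarrow>cop x. tev (f a) (g b) (cop y)) =
    (\<Sum>i\<le>m. \<Sum>j\<le>n. \<Sum>(a, b)\<leftarrow>cop x.
       tev (\<lambda>c. f (comp Hn i a) (comp Hn j c)) (\<lambda>d. g (comp Hn (m - i) b) (comp Hn (n - j) d)) (cop y))"
proof -
  have "(\<Sum>(a, b)\<leftarrow>cop x. tev (f a) (g b) (cop y)) =
      (\<Sum>(a, b)\<leftarrow>cop x. \<Sum>j\<le>n. tev (\<lambda>c. f a (comp Hn j c)) (\<lambda>d. g b (comp Hn (n - j) d)) (cop y))"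
    using f g unfolding bilin_form_def by (simp add: cop_graded[OF y])
  also have "\<dots> = (\<Sum>j\<le>n. \<Sum>(c, d)\<leftarrow>cop y.
      tev (\<lambda>a. f a (comp Hn j c)) (\<lambda>b. g b (comp Hn (n - j) d)) (cop x))"
    by (simp add: tev_def sum_list_pairs_sum sum_list_pairs_swap[of _ "cop x"])
  also have "\<dots> = (\<Sum>j\<le>n. \<Sum>(c, d)\<leftarrow>cop y. \<Sum>i\<le>m.
      tev (\<lambda>a. f (comp Hn i a) (comp Hn j c)) (\<lambda>b. g (comp Hn (m - i) b) (comp Hn (n - j) d)) (cop x))"
    using f g unfolding bilin_form_def by (simp add: cop_graded[OF x])
  also have "\<dots> = (\<Sum>i\<le>m. \<Sum>j\<le>n. \<Sum>(a, b)\<leftarrow>cop x.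
      tev (\<lambda>c. f (comp Hn i a) (comp Hn j c)) (\<lambda>d. g (comp Hn (m - i) b) (comp Hn (n - j) d)) (cop y))"
    by (simp add: tev_def sum_list_pairs_sum sum_list_pairs_swap[of _ "cop y"] sum.swap[of _ "{..n}"])
  finally show ?thesis .
qed

lemma bilin_form_comp0:
  assumes "bilin_form smult B"
  shows "B (comp Hn 0 a) (comp Hn 0 c) = eps a * eps c * B one one"
proof -
  have "B (comp Hn 0 a) (comp Hn 0 c) = eps c * B (comp Hn 0 a) one"
    using assms unfolding bilin_form_def by (simp add: lin_form_comp0)
  also have "B (comp Hn 0 a) one = eps a * B one one"
    using assms unfolding bilin_form_def by (simp add: lin_form_comp0[of "\<lambda>a. B a one"])
  finally show ?thesis by simp
qed

lemma cop_cop_concentrated_left: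
  assumes x: "x \<in> Hn m" and y: "y \<in> Hn n"
    and f: "bilin_form smult f" and g: "bilin_form smult g"
    and f_top: "\<And>i j a c. i \<le> m \<Longrightarrow> j \<le> n \<Longrightarrow> (i, j) \<noteq> (m, n) \<Longrightarrow> f (comp Hn i a) (comp Hn j c) = 0"
  shows "(\<Sum>(a, b)\<leftarrow>cop x. tev (f a) (g b) (cop y)) = f x y * g one one"
proof -
  have "(\<Sum>(a, b)\<leftarrow>cop x. tev (f a) (g b) (cop y)) =
      (\<Sum>(a, b)\<leftarrow>cop x. tev (\<lambda>c. f (comp Hn m a) (comp Hn n c)) (\<lambda>d. g (comp Hn 0 b) (comp Hn 0 d)) (cop y))"
    unfolding cop_cop_graded[OF x y f g]
    by (rule trans[OF sum_atMost_atMost_single[where k = m and l = n]])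
      (auto simp: f_top tev_zero_left split_def)
  also have "\<dots> = (\<Sum>(a, b)\<leftarrow>cop x. f (comp Hn m a) y * eps b * g one one)"
  proof -
    have "tev (\<lambda>c. f (comp Hn m a) (comp Hn n c)) (\<lambda>d. g (comp Hn 0 b) (comp Hn 0 d)) (cop y) =
        tev (\<lambda>c. f (comp Hn m a) (comp Hn n c)) (\<lambda>d. (eps b * g one one) * eps d) (cop y)" for a b
      by (simp add: bilin_form_comp0[OF g] mult_ac)
    also have "\<dots> a b = f (comp Hn m a) y * eps b * g one one" for a b
      using f unfolding bilin_form_def
      by (simp add: tev_scale_right counit_right lin_form_comp comp_homogeneous[OF y])
    finally show ?thesis by simp
  qed
  also have "\<dots> = tev (\<lambda>a. f (comp Hn m a) y) eps (cop x) * g one one"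
    by (simp add: tev_def split_def sum_list_mult_const)
  also have "\<dots> = f x y * g one one"
    using f lin_form_comp[of "\<lambda>a. f a y" m] unfolding bilin_form_def
    by (simp add: counit_right comp_homogeneous[OF x])
  finally show ?thesis .
qed

lemma cop_cop_concentrated_right:
  assumes x: "x \<in> Hn m" and y: "y \<in> Hn n"
    and f: "bilin_form smult f" and g: "bilin_form smult g"
    and g_top: "\<And>i j b d. i \<le> m \<Longrightarrow> j \<le> n \<Longrightarrow> (i, j) \<noteq> (m, n) \<Longrightarrow> g (comp Hn i b) (comp Hn j d) = 0"
  shows "(\<Sum>(a, b)\<leftarrow>cop x. tev (f a) (g b) (cop y)) = f one one * g x y"
proof -
  have g_bottom: "g (comp Hn (m - i) b) (comp Hn (n - j) d) = 0"
    if "i \<le> m" "j \<le> n" "(i, j) \<noteq> (0, 0)" for i j b d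
    using that by (intro g_top) auto
  have "(\<Sum>(a, b)\<leftarrow>cop x. tev (f a) (g b) (cop y)) =
      (\<Sum>(a, b)\<leftarrow>cop x. tev (\<lambda>c. f (comp Hn 0 a) (comp Hn 0 c)) (\<lambda>d. g (comp Hn m b) (comp Hn n d)) (cop y))"
    unfolding cop_cop_graded[OF x y f g]
    by (rule trans[OF sum_atMost_atMost_single[where k = 0 and l = 0]])
      (auto simp: g_bottom tev_zero_right split_def)
  also have "\<dots> = (\<Sum>(a, b)\<leftarrow>cop x. f one one * (eps a * g (comp Hn m b) y))"
  proof -
    have "tev (\<lambda>c. f (comp Hn 0 a) (comp Hn 0 c)) (\<lambda>d. g (comp Hn m b) (comp Hn n d)) (cop y) =
        tev (\<lambda>c. (eps a * f one one) * eps c) (\<lambda>d. g (comp Hn m b) (comp Hn n d)) (cop y)" for a b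
      by (simp add: bilin_form_comp0[OF f] mult_ac)
    also have "\<dots> a b = f one one * (eps a * g (comp Hn m b) y)" for a b
      using g unfolding bilin_form_def
      by (simp add: tev_scale_left counit_left lin_form_comp comp_homogeneous[OF y])
    finally show ?thesis by simp
  qed
  also have "\<dots> = f one one * tev eps (\<lambda>b. g (comp Hn m b) y) (cop x)"
    by (simp add: tev_def split_def sum_list_const_mult)
  also have "\<dots> = f one one * g x y"
    using g lin_form_comp[of "\<lambda>b. g b y" m] unfolding bilin_form_def
    by (simp add: counit_left comp_homogeneous[OF x])
  finally show ?thesis .
qed

lemma lin_form_convpow: "lf \<phi> \<Longrightarrow> lf (convpow cop eps \<phi> p)"
  by (induction p) (simp_all add: lin_form_eps lin_form_cop conv_def[abs_def])

lemma convpow_vanishes: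
  assumes \<phi>: "lf \<phi>" "\<phi> one = 0" and "x \<in> Hn n" "n < p"
  shows "convpow cop eps \<phi> p x = 0"
  using assms(3,4)
proof (induction p arbitrary: n x)
  case (Suc p)
  have "convpow cop eps \<phi> (Suc p) x =
      (\<Sum>i\<le>n. tev (\<lambda>a. \<phi> (comp Hn i a)) (\<lambda>b. convpow cop eps \<phi> p (comp Hn (n - i) b)) (cop x))"
    using Suc.prems(1) by (simp add: conv_def cop_graded \<phi>(1) lin_form_convpow)
  also have "\<dots> = 0"
  proof (intro sum.neutral ballI)
    fix i assume i: "i \<in> {..n}"
    show "tev (\<lambda>a. \<phi> (comp Hn i a)) (\<lambda>b. convpow cop eps \<phi> p (comp Hn (n - i) b)) (cop x) = 0"
    proof (cases "i = 0")
      case True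
      then show ?thesis
        using tev_zero_left by (simp add: lin_form_comp0 \<phi>)
    next
      case False
      then have "n - i < p"
        using i Suc.prems(2) by auto
      then have "\<And>b. convpow cop eps \<phi> p (comp Hn (n - i) b) = 0"
        using Suc.IH comp_in_Hn by blast
      then show ?thesis
        by (simp add: tev_zero_right)
    qed
  qed
  finally show ?case .
qed simp

lemma convpow_eventually_zero:
  assumes "lf \<phi>" "\<phi> one = 0"
  shows "\<exists>N. \<forall>p>N. convpow cop eps \<phi> p x = 0"
proof -
  obtain N where N: "\<forall>n\<ge>N. comp Hn n x = 0"
    using comp_eventually_zero by blast
  have "convpow cop eps \<phi> p x = 0" if "N < p" for p
  proof -
    have "convpow cop eps \<phi> p x = (\<Sum>n<N. convpow cop eps \<phi> p (comp Hn n x))"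
      by (rule lin_form_sum_comp[OF lin_form_convpow[OF assms(1)] N])
    also have "\<dots> = 0"
      using that by (intro sum.neutral ballI convpow_vanishes[OF assms comp_in_Hn]) auto
    finally show ?thesis .
  qed
  then show ?thesis by blast
qed

lemma convpow_add:
  assumes "lf \<phi>"
  shows "tev (convpow cop eps \<phi> p) (convpow cop eps \<phi> r) (cop x) = convpow cop eps \<phi> (p + r) x"
proof (induction p arbitrary: x)
  case 0
  then show ?case
    using counit_left[OF lin_form_convpow[OF assms]] by simp
next
  case (Suc p)
  have "tev (convpow cop eps \<phi> (Suc p)) (convpow cop eps \<phi> r) (cop x) =
      tev (\<lambda>y. tev \<phi> (convpow cop eps \<phi> p) (cop y)) (convpow cop eps \<phi> r) (cop x)"
    by (simp add: conv_def[abs_def])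
  also have "\<dots> = tev \<phi> (\<lambda>z. tev (convpow cop eps \<phi> p) (convpow cop eps \<phi> r) (cop z)) (cop x)"
    by (rule coassoc[OF assms lin_form_convpow[OF assms] lin_form_convpow[OF assms]])
  finally show ?case
    by (simp add: Suc.IH conv_def[abs_def])
qed

end

locale unital_lin_form = conn_graded_hopf_alg smult mult one cop eps Hn
  for smult :: "'k::field_char_0 \<Rightarrow> 'h::ab_group_add \<Rightarrow> 'h"
    and mult one cop eps Hn +
  fixes q :: "'h \<Rightarrow> 'k"
  assumes lin_form_q: "lin_form smult q" and q_one: "q one = 1"
begin

abbreviation "phi \<equiv> \<lambda>y. q y - eps y"

lemma lin_form_phi: "lf phi"
  by (rule lin_form_diff[OF lin_form_q lin_form_eps])

lemma phi_one: "phi one = 0"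
  by (simp add: q_one eps_one)

lemma qpow_eq_sum:
  assumes "\<forall>p>N. convpow cop eps phi p x = 0"
  shows "qpow cop eps q h x = (\<Sum>p\<le>N. (h gchoose p) * convpow cop eps phi p x)"
proof -
  let ?t = "\<lambda>p. (h gchoose p) * convpow cop eps phi p x"
  have "{p. ?t p \<noteq> 0} \<subseteq> {..N}"
    using assms by (auto simp: not_le[symmetric])
  then have "(\<Sum>p\<in>{p. ?t p \<noteq> 0}. ?t p) = (\<Sum>p\<le>N. ?t p)"
    by (intro sum.mono_neutral_left) auto
  then show ?thesis
    by (simp add: qpow_def)
qed

lemma qpow_homogeneous_sum:
  "x \<in> Hn k \<Longrightarrow> k \<le> N \<Longrightarrow> qpow cop eps q h x = (\<Sum>p\<le>N. (h gchoose p) * convpow cop eps phi p x)"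
  by (rule qpow_eq_sum) (auto intro: convpow_vanishes[OF lin_form_phi phi_one])

lemma lin_form_qpow: "lf (qpow cop eps q h)"
  unfolding lin_form_def
proof (intro conjI allI)
  note P = lin_form_convpow[OF lin_form_phi, unfolded lin_form_def]
  fix x y
  obtain N where x: "\<forall>p>N. convpow cop eps phi p x = 0" and y: "\<forall>p>N. convpow cop eps phi p y = 0"
    using convpow_eventually_zero[OF lin_form_phi phi_one, of x]
      convpow_eventually_zero[OF lin_form_phi phi_one, of y]
    by (metis max.strict_boundedE)
  then have xy: "\<forall>p>N. convpow cop eps phi p (x + y) = 0"
    using P by simp
  show "qpow cop eps q h (x + y) = qpow cop eps q h x + qpow cop eps q h y"
    unfolding qpow_eq_sum[OF x] qpow_eq_sum[OF y] qpow_eq_sum[OF xy]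
    by (simp add: P sum.distrib algebra_simps)
next
  note P = lin_form_convpow[OF lin_form_phi, unfolded lin_form_def]
  fix c x
  obtain N where x: "\<forall>p>N. convpow cop eps phi p x = 0"
    using convpow_eventually_zero[OF lin_form_phi phi_one] by blast
  then have cx: "\<forall>p>N. convpow cop eps phi p (smult c x) = 0"
    using P by simp
  show "qpow cop eps q h (smult c x) = c * qpow cop eps q h x"
    unfolding qpow_eq_sum[OF x] qpow_eq_sum[OF cx]
    by (simp add: P sum_distrib_left algebra_simps)
qed

lemma qpow_conv:
  assumes x: "x \<in> Hn n"
  shows "tev (qpow cop eps q s) (qpow cop eps q t) (cop x) = qpow cop eps q (s + t) x"
proof -
  let ?P = "convpow cop eps phi"
  let ?T = "\<lambda>p r i. tev (\<lambda>a. ?P p (comp Hn i a)) (\<lambda>b. ?P r (comp Hn (n - i) b)) (cop x)"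
  have P: "lf (?P p)" for p
    by (rule lin_form_convpow[OF lin_form_phi])
  have "tev (qpow cop eps q s) (qpow cop eps q t) (cop x) =
      (\<Sum>i\<le>n. tev (\<lambda>a. qpow cop eps q s (comp Hn i a)) (\<lambda>b. qpow cop eps q t (comp Hn (n - i) b)) (cop x))"
    by (rule cop_graded[OF x lin_form_qpow lin_form_qpow])
  also have "\<dots> = (\<Sum>i\<le>n. tev (\<lambda>a. \<Sum>p\<le>n. (s gchoose p) * ?P p (comp Hn i a))
      (\<lambda>b. \<Sum>r\<le>n. (t gchoose r) * ?P r (comp Hn (n - i) b)) (cop x))"
    by (intro sum.cong refl arg_cong2[where f = "\<lambda>f g. tev f g (cop x)"] ext
        qpow_homogeneous_sum[OF comp_in_Hn]) auto
  also have "\<dots> = (\<Sum>i\<le>n. \<Sum>p\<le>n. \<Sum>r\<le>n. (s gchoose p) * (t gchoose r) * ?T p r i)"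
    by (simp only: tev_sum_left tev_sum_right tev_scale_left tev_scale_right sum_distrib_left mult.assoc)
  also have "\<dots> = (\<Sum>p\<le>n. \<Sum>i\<le>n. \<Sum>r\<le>n. (s gchoose p) * (t gchoose r) * ?T p r i)"
    by (rule sum.swap)
  also have "\<dots> = (\<Sum>p\<le>n. \<Sum>r\<le>n. \<Sum>i\<le>n. (s gchoose p) * (t gchoose r) * ?T p r i)"
    by (rule sum.cong[OF refl], rule sum.swap)
  also have "\<dots> = (\<Sum>p\<le>n. \<Sum>r\<le>n. (s gchoose p) * (t gchoose r) * (\<Sum>i\<le>n. ?T p r i))"
    by (simp only: sum_distrib_left)
  also have "\<dots> = (\<Sum>p\<le>n. \<Sum>r\<le>n. (s gchoose p) * (t gchoose r) * ?P (p + r) x)"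
    by (simp add: cop_graded[OF x P P, symmetric] convpow_add[OF lin_form_phi])
  also have "\<dots> = (\<Sum>k\<le>n. ((s + t) gchoose k) * ?P k x)"
    by (rule gchoose_convolution_sum) (rule convpow_vanishes[OF lin_form_phi phi_one x])
  also have "\<dots> = qpow cop eps q (s + t) x"
    by (rule qpow_homogeneous_sum[OF x, symmetric]) simp
  finally show ?thesis .
qed

lemma qpow_one: "qpow cop eps q 1 x = q x"
proof -
  obtain N where N: "\<forall>p>N. convpow cop eps phi p x = 0"
    using convpow_eventually_zero[OF lin_form_phi phi_one] by blast
  then have "qpow cop eps q 1 x = (\<Sum>p\<le>Suc N. (1 gchoose p) * convpow cop eps phi p x)"
    by (intro qpow_eq_sum) simp
  also have "\<dots> = (\<Sum>p\<in>{0, 1}. (1 gchoose p) * convpow cop eps phi p x)"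
  proof (rule sum.mono_neutral_right)
    have "(1::'k) gchoose p = of_nat (1 choose p)" for p
      by (metis binomial_gbinomial of_nat_1)
    then show "\<forall>p\<in>{..Suc N} - {0, 1}. (1 gchoose p) * convpow cop eps phi p x = 0"
      by auto
  qed auto
  also have "\<dots> = q x"
    using counit_right[OF lin_form_phi] by (simp add: conv_def)
  finally show ?thesis .
qed

end

locale inverse_factorial = conn_graded_hopf_alg smult mult one cop eps Hn
  for smult :: "'k::field_char_0 \<Rightarrow> 'h::ab_group_add \<Rightarrow> 'h"
    and mult one cop eps Hn +
  fixes \<alpha> q :: "'h \<Rightarrow> 'k"
  assumes inv_fact: "inv_fact_char smult one cop Hn \<alpha> q"

sublocale inverse_factorial \<subseteq> unital_lin_form smult mult one cop eps Hn q
  using inv_fact by unfold_locales (simp_all add: inv_fact_char_def)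

context inverse_factorial
begin

lemma conv_square_q:
  assumes x: "x \<in> Hn n"
  shows "tev q q (cop x) = 2 ^ n * q x"
proof -
  consider "n = 0" | "n = 1" | "2 \<le> n"
    by linarith
  then show ?thesis
  proof cases
    case 1
    then have "tev q q (cop x) = eps x * tev q q (cop one)"
      using lin_form_H0[OF lin_form_cop[OF lin_form_q lin_form_q]] x by simp
    moreover have "q x = eps x"
      using lin_form_H0[OF lin_form_q] x 1 by (simp add: q_one)
    ultimately show ?thesis
      using 1 by (simp add: cop_one lin_form_q q_one)
  next
    case 2
    have q0: "(\<lambda>a. q (comp Hn 0 a)) = eps"
      by (simp add: lin_form_comp0 lin_form_q q_one fun_eq_iff)
    have "tev q q (cop x) = tev eps (\<lambda>b. q (comp Hn 1 b)) (cop x) + tev (\<lambda>a. q (comp Hn 1 a)) eps (cop x)"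
      using cop_graded[OF x lin_form_q lin_form_q] 2 by (simp add: q0)
    then show ?thesis
      using 2 x by (simp add: counit_left counit_right lin_form_comp lin_form_q comp_homogeneous)
  next
    case 3
    then have "q x = (tev q q (cop x) - 2 * q x) / (2 ^ n - 2)"
      using inv_fact x unfolding inv_fact_char_def by (simp add: q_one)
    moreover have "(2::'k) ^ n - 2 \<noteq> 0"
      using two_power_neq_two[OF 3] by simp
    ultimately show ?thesis
      by (simp add: field_simps)
  qed
qed

definition mult_defect :: "'h \<Rightarrow> 'h \<Rightarrow> 'k" where
  "mult_defect a c = q (mult a c) - q a * q c"

lemma bilin_form_mult_defect: "bilin_form smult mult_defect"
  unfolding bilin_form_def mult_defect_def
proof (intro conjI allI)
  show "lf (\<lambda>c. q (mult a c) - q a * q c)" for a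
    by (intro lin_form_diff lin_form_mult_right lin_form_scale lin_form_q)
  show "lf (\<lambda>a. q (mult a c) - q a * q c)" for c
    by (intro lin_form_diff lin_form_mult_left lin_form_scale_right lin_form_q)
qed

lemma mult_defect_H0_left: "a \<in> Hn 0 \<Longrightarrow> mult_defect a c = 0"
  using H0_eq lin_form_q
  by (auto simp: mult_defect_def mult_smult_left mult_one_left q_one lin_form_def)

lemma mult_defect_H0_right: "c \<in> Hn 0 \<Longrightarrow> mult_defect a c = 0"
  using H0_eq lin_form_q
  by (auto simp: mult_defect_def mult_smult_right mult_one_right q_one lin_form_def)

lemma conv_square_mult:
  "tev q q (cop (mult x y)) = tev q q (cop x) * tev q q (cop y)
    + (\<Sum>(a, b)\<leftarrow>cop x. tev (mult_defect a) (\<lambda>d. q b * q d) (cop y))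
    + (\<Sum>(a, b)\<leftarrow>cop x. tev (\<lambda>c. q a * q c) (mult_defect b) (cop y))
    + (\<Sum>(a, b)\<leftarrow>cop x. tev (mult_defect a) (mult_defect b) (cop y))"
proof -
  have split: "(\<lambda>c. q (mult a c)) = (\<lambda>c. q a * q c + mult_defect a c)" for a
    by (simp add: mult_defect_def fun_eq_iff)
  have "tev q q (cop (mult x y)) = (\<Sum>(a, b)\<leftarrow>cop x. tev (\<lambda>c. q (mult a c)) (\<lambda>d. q (mult b d)) (cop y))"
    unfolding cop_mult[OF lin_form_q lin_form_q] by (simp add: tev_def)
  also have "\<dots> = (\<Sum>(a, b)\<leftarrow>cop x. q a * q b * tev q q (cop y)
      + tev (mult_defect a) (\<lambda>d. q b * q d) (cop y) + tev (\<lambda>c. q a * q c) (mult_defect b) (cop y)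
      + tev (mult_defect a) (mult_defect b) (cop y))"
    unfolding split by (simp add: tev_add_left tev_add_right tev_scale_left tev_scale_right ac_simps)
  also have "\<dots> = tev q q (cop x) * tev q q (cop y)
      + (\<Sum>(a, b)\<leftarrow>cop x. tev (mult_defect a) (\<lambda>d. q b * q d) (cop y))
      + (\<Sum>(a, b)\<leftarrow>cop x. tev (\<lambda>c. q a * q c) (mult_defect b) (cop y))
      + (\<Sum>(a, b)\<leftarrow>cop x. tev (mult_defect a) (mult_defect b) (cop y))"
    by (simp add: split_def sum_list_addf sum_list_mult_const tev_def)
  finally show ?thesis .
qed

lemma mult_defect_homogeneous:
  "x \<in> Hn m \<Longrightarrow> y \<in> Hn n \<Longrightarrow> mult_defect x y = 0"
proof (induction "m + n" arbitrary: m n x y rule: less_induct)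
  case less
  note x = less.prems(1) and y = less.prems(2)
  consider "m = 0" | "n = 0" | "0 < m" "0 < n"
    by blast
  then show ?case
  proof cases
    case 1
    then show ?thesis using x by (simp add: mult_defect_H0_left)
  next
    case 2
    then show ?thesis using y by (simp add: mult_defect_H0_right)
  next
    case 3
    have top: "mult_defect (comp Hn i a) (comp Hn j c) = 0"
      if "i \<le> m" "j \<le> n" "(i, j) \<noteq> (m, n)" for i j a c
      using that by (intro less.hyps[of i j] comp_in_Hn) auto
    have product: "bilin_form smult (\<lambda>a c. q a * q c)"
      by (rule bilin_form_product[OF lin_form_q lin_form_q])
    have defect_one: "mult_defect one one = 0"
      by (simp add: mult_defect_def mult_one_left q_one)
    have "(\<Sum>(a, b)\<leftarrow>cop x. tev (mult_defect a) (\<lambda>d. q b * q d) (cop y)) = mult_defect x y"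
      using cop_cop_concentrated_left[OF x y bilin_form_mult_defect product top] by (simp add: q_one)
    moreover have "(\<Sum>(a, b)\<leftarrow>cop x. tev (\<lambda>c. q a * q c) (mult_defect b) (cop y)) = mult_defect x y"
      using cop_cop_concentrated_right[OF x y product bilin_form_mult_defect top] by (simp add: q_one)
    moreover have "(\<Sum>(a, b)\<leftarrow>cop x. tev (mult_defect a) (mult_defect b) (cop y)) = 0"
      using cop_cop_concentrated_left[OF x y bilin_form_mult_defect bilin_form_mult_defect top]
      by (simp add: defect_one)
    ultimately have "2 ^ (m + n) * q (mult x y) = 2 ^ m * q x * (2 ^ n * q y) + 2 * mult_defect x y"
      using conv_square_mult[of x y]
      by (simp add: conv_square_q[OF mult_graded[OF x y]] conv_square_q[OF x] conv_square_q[OF y])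
    then have "(2 ^ (m + n) - 2) * mult_defect x y = 0"
      by (simp add: mult_defect_def algebra_simps power_add)
    then show ?thesis
      using two_power_neq_two[of "m + n", where 'a = 'k] 3 by simp
  qed
qed

lemma q_mult: "q (mult x y) = q x * q y"
  using multiplicative_if_homogeneous[OF lin_form_q] mult_defect_homogeneous
  unfolding mult_defect_def by simp

lemma qpow_power_of_two: "x \<in> Hn n \<Longrightarrow> qpow cop eps q (2 ^ j) x = (2 ^ j) ^ n * q x"
proof (induction j arbitrary: n x)
  case 0
  then show ?case
    by (simp add: qpow_one)
next
  case (Suc j)
  let ?t = "(2::'k) ^ j"
  have "qpow cop eps q (2 ^ Suc j) x = tev (qpow cop eps q ?t) (qpow cop eps q ?t) (cop x)"
    using qpow_conv[OF Suc.prems, of ?t ?t] by simp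
  also have "\<dots> = (\<Sum>i\<le>n. tev (\<lambda>a. ?t ^ i * q (comp Hn i a)) (\<lambda>b. ?t ^ (n - i) * q (comp Hn (n - i) b)) (cop x))"
    unfolding cop_graded[OF Suc.prems lin_form_qpow lin_form_qpow]
    by (intro sum.cong refl arg_cong2[where f = "\<lambda>f g. tev f g (cop x)"] ext Suc.IH comp_in_Hn)
  also have "\<dots> = ?t ^ n * (\<Sum>i\<le>n. tev (\<lambda>a. q (comp Hn i a)) (\<lambda>b. q (comp Hn (n - i) b)) (cop x))"
    unfolding sum_distrib_left
    by (intro sum.cong refl) (simp add: tev_scale_left tev_scale_right power_add[symmetric])
  also have "\<dots> = (2 ^ Suc j) ^ n * q x"
    by (simp add: cop_graded[OF Suc.prems lin_form_q lin_form_q, symmetric] conv_square_q[OF Suc.prems]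
        power_mult_distrib)
  finally show ?case .
qed

lemma qpow_homogeneous:
  assumes x: "x \<in> Hn n"
  shows "qpow cop eps q h x = h ^ n * q x"
proof -
  let ?c = "\<lambda>p. convpow cop eps phi p x"
  have "range (\<lambda>j::nat. (2::'k) ^ j) \<subseteq> {z. (\<Sum>p\<le>n. ?c p * (z gchoose p)) = q x * z ^ n}"
    using qpow_power_of_two[OF x] qpow_homogeneous_sum[OF x order.refl]
    by (auto simp: mult.commute)
  then have "infinite {z. (\<Sum>p\<le>n. ?c p * (z gchoose p)) = q x * z ^ n}"
    using range_inj_infinite[OF inj_two_power] finite_subset by blast
  then show ?thesis
    using gchoose_sum_eq_power_if_infinite[where c = ?c and d = "q x" and h = h] qpow_homogeneous_sum[OF x order.refl]
    by (simp add: mult.commute)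
qed

lemma character_qpow: "character smult mult one (qpow cop eps q h)"
  unfolding character_def
proof (intro conjI allI)
  show "lf (qpow cop eps q h)"
    by (rule lin_form_qpow)
  show "qpow cop eps q h one = 1"
    by (simp add: qpow_homogeneous[OF one_in_H0] q_one)
  show "qpow cop eps q h (mult x y) = qpow cop eps q h x * qpow cop eps q h y" for x y
  proof (rule multiplicative_if_homogeneous[OF lin_form_qpow])
    fix m n x y
    assume x: "x \<in> Hn m" and y: "y \<in> Hn n"
    then show "qpow cop eps q h (mult x y) = qpow cop eps q h x * qpow cop eps q h y"
      by (simp add: qpow_homogeneous[OF mult_graded[OF x y]] qpow_homogeneous q_mult power_add)
  qed
qed

end

theorem mainTheorem1:
  fixes smult :: "'k::field_char_0 \<Rightarrow> 'h::ab_group_add \<Rightarrow> 'h"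
    and mult :: "'h \<Rightarrow> 'h \<Rightarrow> 'h" and one :: 'h
    and cop :: "'h \<Rightarrow> ('h \<times> 'h) list" and eps :: "'h \<Rightarrow> 'k"
    and Hn :: "nat \<Rightarrow> 'h set"
    and \<alpha> q :: "'h \<Rightarrow> 'k"
  assumes "conn_graded_hopf smult mult one cop eps Hn"
    and "\<exists>x\<in>Hn 1. \<alpha> x \<noteq> 0"
    and "inv_fact_char smult one cop Hn \<alpha> q"
  shows "(\<forall>x y. q (mult x y) = q x * q y) \<and>
         (\<forall>h. character smult mult one (qpow cop eps q h) \<and>
              (\<forall>n x. x \<in> Hn n \<longrightarrow> qpow cop eps q h x = h ^ n * q x))"
proof -
  interpret inverse_factorial smult mult one cop eps Hn \<alpha> q
    using assms(1,3) by unfold_locales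
  show ?thesis
    using q_mult character_qpow qpow_homogeneous by blast
qed

end
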